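(* Let $n\ge 1$ and let $P$ be a probability distribution on $\mathbb{R}^n \times \mathbb{R}$ of a pair $(\mathbf{x},y)$ with $\mathbb{E}|y|<\infty$. For a set of feature indices $S\subseteq\{1,\dots,n\}$ and a fixed width parameter $\gamma>0$, let $\kappa_S$ be the Gaussian kernel on the features in $S$, $$\kappa_S(\mathbf{x},\mathbf{x}') = \exp\Big(-\gamma \sum_{j\in S} (x_j - x'_j)^2\Big).$$ Let $S\subseteq\{1,\dots,n\}$ and let $i\notin S$ be an irrelevant feature. Then, with $(\mathbf{x},y)$ and $(\mathbf{x}',y')$ drawn independently from $P$, $$\mathbb{E}_{(\mathbf{x},y) \sim P, (\mathbf{x}', y')\sim P}\big[y y' \kappa_{S\cup\{i\}}(\mathbf{x},\mathbf{x}')\big] \leq \mathbb{E}_{(\mathbf{x},y) \sim P, (\mathbf{x}', y')\sim P}\big[y y' \kappa_{S}(\mathbf{x},\mathbf{x}')\big].$$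
   Context: A feature $i$ (the coordinate $x_i$ of $\mathbf{x}$) is called irrelevant if its value $x_i$ is statistically independent of the label $y$ and of the other features $(x_j)_{j\ne i}$, i.e. $x_i$ is independent of the random vector $\big(y,(x_j)_{j\neq i}\big)$. The same width $\gamma$ is used for all kernels $\kappa_S$. *)

theory Defs
  imports "HOL-Probability.Probability"
begin

definition gauss_kernel :: "real \<Rightarrow> 'n::finite set \<Rightarrow> real^'n \<Rightarrow> real^'n \<Rightarrow> real" where
  "gauss_kernel \<gamma> S x x' = exp (- \<gamma> * (\<Sum>j\<in>S. (x$j - x'$j)^2))"

text \<open>Feature i is irrelevant under P: x_i is independent of (y, (x_j)_{j ~= i}).
  The other features are encoded as the vector with coordinate i zeroed out.\<close>
definition irrelevant_feature :: "((real^'n::finite) \<times> real) measure \<Rightarrow> 'n \<Rightarrow> bool" where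
  "irrelevant_feature P i \<longleftrightarrow>
     (\<forall>A \<in> sets (borel :: real measure). \<forall>B \<in> sets (borel :: (real \<times> (real^'n)) measure).
        measure P {\<omega> \<in> space P. (case \<omega> of (x, y) \<Rightarrow> x $ i) \<in> A
                                \<and> (case \<omega> of (x, y) \<Rightarrow> (y, \<chi> j. if j = i then 0 else x $ j)) \<in> B}
        = measure P {\<omega> \<in> space P. (case \<omega> of (x, y) \<Rightarrow> x $ i) \<in> A}
          * measure P {\<omega> \<in> space P. (case \<omega> of (x, y) \<Rightarrow> (y, \<chi> j. if j = i then 0 else x $ j)) \<in> B})"

end

theory Submission
  imports Defs
begin

text \<open>Since \<kappa>_(S \<union> {i})(x, x') = \<kappa>_S(x, x') \<cdot> exp(-\<gamma> (x_i - x'_i)^2) and x_i is independent of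
  (y, x_S), the left-hand side factorises as E[y y' \<kappa>_S] \<cdot> E[exp(-\<gamma> (x_i - x'_i)^2)], and the
  second factor lies in [0, 1]. It remains to show E[y y' \<kappa>_S] \<ge> 0, i.e. that the Gaussian kernel
  is positive semidefinite: completing the square gives \<kappa>_S(x, x') = c \<integral> \<phi>(x, w) \<phi>(x', w) dw with
  c > 0 and \<phi>(x, w) = \<Prod>_(j \<in> S) exp(-2\<gamma> (x_j - w_j)^2), so by Fubini
  E[y y' \<kappa>_S] = c \<integral> E[y \<phi>(x, w)]^2 dw.\<close>

lemma
  fixes f g :: "_ \<Rightarrow> real"
  assumes "sigma_finite_measure M1" "sigma_finite_measure M2" "integrable M1 f" "integrable M2 g"
  shows integrable_pair_measure_mult: "integrable (M1 \<Otimes>\<^sub>M M2) (\<lambda>(x, y). f x * g y)"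
    and integral_pair_measure_mult:
      "(\<integral>(x, y). f x * g y \<partial>(M1 \<Otimes>\<^sub>M M2)) = integral\<^sup>L M1 f * integral\<^sup>L M2 g"
proof -
  interpret pair_sigma_finite M1 M2 using assms(1,2) by (simp add: pair_sigma_finite_def)
  have [measurable]: "f \<in> borel_measurable M1" "g \<in> borel_measurable M2" using assms by auto
  show int: "integrable (M1 \<Otimes>\<^sub>M M2) (\<lambda>(x, y). f x * g y)"
  proof (rule Fubini_integrable)
    have "integrable M1 (\<lambda>x. \<bar>f x\<bar> * (\<integral>y. \<bar>g y\<bar> \<partial>M2))"
      using assms(3) by (intro integrable_mult_left integrable_abs)
    then show "integrable M1 (\<lambda>x. \<integral>y. norm ((\<lambda>(x, y). f x * g y) (x, y)) \<partial>M2)"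
      by (simp add: abs_mult)
    show "AE x in M1. integrable M2 (\<lambda>y. (\<lambda>(x, y). f x * g y) (x, y))"
      using assms(4) by auto
  qed measurable
  show "(\<integral>(x, y). f x * g y \<partial>(M1 \<Otimes>\<^sub>M M2)) = integral\<^sup>L M1 f * integral\<^sup>L M2 g"
    using integral_fst'[OF int, symmetric] by simp
qed

lemma (in prob_space) indep_var_rectangleI:
  assumes X: "random_variable MX X" and Z: "random_variable MZ Z"
    and rect: "\<And>A B. A \<in> sets MX \<Longrightarrow> B \<in> sets MZ \<Longrightarrow>
      prob {\<omega> \<in> space M. X \<omega> \<in> A \<and> Z \<omega> \<in> B} = prob {\<omega> \<in> space M. X \<omega> \<in> A} * prob {\<omega> \<in> space M. Z \<omega> \<in> B}"
  shows "indep_var MX X MZ Z"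
proof -
  have preimages: "sigma_sets (space M) {V -` A \<inter> space M |A. A \<in> sets N} = {V -` A \<inter> space M |A. A \<in> sets N}"
    if "V \<in> measurable M N" for V :: "'a \<Rightarrow> 'c" and N
  proof -
    have "V \<in> space M \<rightarrow> space N" using measurable_space[OF that] by auto
    from sigma_sets_vimage_commute[OF this, of "sets N"] show ?thesis
      by (simp add: sets.sigma_sets_eq)
  qed
  show ?thesis
    unfolding indep_var_eq indep_sets2_eq preimages[OF X] preimages[OF Z]
  proof (intro conjI X Z ballI)
    show "{X -` A \<inter> space M |A. A \<in> sets MX} \<subseteq> events" "{Z -` B \<inter> space M |B. B \<in> sets MZ} \<subseteq> events"
      using X Z by (auto simp: measurable_sets)
    fix a b assume "a \<in> {X -` A \<inter> space M |A. A \<in> sets MX}" "b \<in> {Z -` B \<inter> space M |B. B \<in> sets MZ}"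
    then obtain A B where "a = X -` A \<inter> space M" "A \<in> sets MX" "b = Z -` B \<inter> space M" "B \<in> sets MZ"
      by blast
    with rect show "prob (a \<inter> b) = prob a * prob b"
      by (simp add: Int_def vimage_def conj_commute conj_left_commute)
  qed
qed

lemma (in prob_space) integral_pair_measure_indep_var_mult:
  fixes F g :: "'b \<Rightarrow> 'b \<Rightarrow> real"
  assumes indep: "indep_var MT T MZ Z"
    and F[measurable]: "(\<lambda>(z, z'). F z z') \<in> borel_measurable (MZ \<Otimes>\<^sub>M MZ)"
    and g[measurable]: "(\<lambda>(t, t'). g t t') \<in> borel_measurable (MT \<Otimes>\<^sub>M MT)"
    and g_bounded: "\<And>t t'. \<bar>g t t'\<bar> \<le> 1"
    and F_int: "integrable (M \<Otimes>\<^sub>M M) (\<lambda>(\<omega>, \<omega>'). F (Z \<omega>) (Z \<omega>'))"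
  shows "(\<integral>(\<omega>, \<omega>'). F (Z \<omega>) (Z \<omega>') * g (T \<omega>) (T \<omega>') \<partial>(M \<Otimes>\<^sub>M M))
       = (\<integral>(\<omega>, \<omega>'). F (Z \<omega>) (Z \<omega>') \<partial>(M \<Otimes>\<^sub>M M)) * (\<integral>(\<omega>, \<omega>'). g (T \<omega>) (T \<omega>') \<partial>(M \<Otimes>\<^sub>M M))"
proof -
  interpret MM: pair_sigma_finite M M ..
  interpret MM: prob_space "M \<Otimes>\<^sub>M M" by (intro prob_space_pair prob_space_axioms)
  have [measurable]: "T \<in> measurable M MT" "Z \<in> measurable M MZ"
    using indep_var_rv1[OF indep] indep_var_rv2[OF indep] by auto
  define \<alpha> where "\<alpha> z = (\<integral>\<omega>'. F z (Z \<omega>') \<partial>M)" for z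
  define \<beta> where "\<beta> t = (\<integral>\<omega>'. g t (T \<omega>') \<partial>M)" for t
  have [measurable]: "\<alpha> \<in> borel_measurable MZ" "\<beta> \<in> borel_measurable MT"
    unfolding \<alpha>_def \<beta>_def by measurable
  have g_int: "integrable (M \<Otimes>\<^sub>M M) (\<lambda>(\<omega>, \<omega>'). g (T \<omega>) (T \<omega>'))"
    by (rule MM.integrable_const_bound[where B=1]) (auto simp: g_bounded)
  have Fg_int: "integrable (M \<Otimes>\<^sub>M M) (\<lambda>(\<omega>, \<omega>'). F (Z \<omega>) (Z \<omega>') * g (T \<omega>) (T \<omega>'))"
    by (rule Bochner_Integration.integrable_bound[OF F_int])
       (auto intro!: mult_left_le simp: abs_mult g_bounded split: prod.split)
  have inner: "AE \<omega> in M. (\<integral>\<omega>'. F (Z \<omega>) (Z \<omega>') * g (T \<omega>) (T \<omega>') \<partial>M) = \<alpha> (Z \<omega>) * \<beta> (T \<omega>)"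
    using MM.AE_integrable_fst'[OF F_int] AE_space
  proof eventually_elim
    case (elim \<omega>)
    have "indep_var borel (g (T \<omega>) \<circ> T) borel (F (Z \<omega>) \<circ> Z)"
      using elim by (intro indep_var_compose[OF indep]) measurable
    moreover have "integrable M (\<lambda>\<omega>'. g (T \<omega>) (T \<omega>'))"
      using elim by (intro integrable_const_bound[where B=1]) (auto simp: g_bounded)
    ultimately show ?case
      using elim indep_var_lebesgue_integral[of "\<lambda>\<omega>'. g (T \<omega>) (T \<omega>')" "\<lambda>\<omega>'. F (Z \<omega>) (Z \<omega>')"]
      unfolding \<alpha>_def \<beta>_def by (simp add: comp_def mult.commute)
  qed
  have "(\<integral>(\<omega>, \<omega>'). F (Z \<omega>) (Z \<omega>') * g (T \<omega>) (T \<omega>') \<partial>(M \<Otimes>\<^sub>M M)) = (\<integral>\<omega>. \<alpha> (Z \<omega>) * \<beta> (T \<omega>) \<partial>M)"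
    using MM.integral_fst'[OF Fg_int] integral_cong_AE[OF _ _ inner] by simp
  also have "\<dots> = (\<integral>\<omega>. \<beta> (T \<omega>) * \<alpha> (Z \<omega>) \<partial>M)"
    by (simp add: mult.commute)
  also have "\<dots> = (\<integral>\<omega>. \<beta> (T \<omega>) \<partial>M) * (\<integral>\<omega>. \<alpha> (Z \<omega>) \<partial>M)"
  proof (rule indep_var_lebesgue_integral)
    show "indep_var borel (\<lambda>\<omega>. \<beta> (T \<omega>)) borel (\<lambda>\<omega>. \<alpha> (Z \<omega>))"
      by (rule indep_var_compose[OF indep, unfolded comp_def]) measurable
    show "integrable M (\<lambda>\<omega>. \<alpha> (Z \<omega>))"
      using MM.integrable_fst'[OF F_int] unfolding \<alpha>_def by simp
    show "integrable M (\<lambda>\<omega>. \<beta> (T \<omega>))"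
      using MM.integrable_fst'[OF g_int] unfolding \<beta>_def by simp
  qed
  also have "\<dots> = (\<integral>(\<omega>, \<omega>'). F (Z \<omega>) (Z \<omega>') \<partial>(M \<Otimes>\<^sub>M M)) * (\<integral>(\<omega>, \<omega>'). g (T \<omega>) (T \<omega>') \<partial>(M \<Otimes>\<^sub>M M))"
    using MM.integral_fst'[OF F_int] MM.integral_fst'[OF g_int] by (simp add: \<alpha>_def \<beta>_def mult.commute)
  finally show ?thesis .
qed

lemma (in prob_space) integral_pair_measure_indep_var_mult_le:
  fixes F g :: "'b \<Rightarrow> 'b \<Rightarrow> real"
  assumes indep: "indep_var MT T MZ Z"
    and F: "(\<lambda>(z, z'). F z z') \<in> borel_measurable (MZ \<Otimes>\<^sub>M MZ)"
    and g[measurable]: "(\<lambda>(t, t'). g t t') \<in> borel_measurable (MT \<Otimes>\<^sub>M MT)"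
    and g_nonneg: "\<And>t t'. 0 \<le> g t t'" and g_le_1: "\<And>t t'. g t t' \<le> 1"
    and F_int: "integrable (M \<Otimes>\<^sub>M M) (\<lambda>(\<omega>, \<omega>'). F (Z \<omega>) (Z \<omega>'))"
    and F_nonneg: "0 \<le> (\<integral>(\<omega>, \<omega>'). F (Z \<omega>) (Z \<omega>') \<partial>(M \<Otimes>\<^sub>M M))"
  shows "(\<integral>(\<omega>, \<omega>'). F (Z \<omega>) (Z \<omega>') * g (T \<omega>) (T \<omega>') \<partial>(M \<Otimes>\<^sub>M M))
       \<le> (\<integral>(\<omega>, \<omega>'). F (Z \<omega>) (Z \<omega>') \<partial>(M \<Otimes>\<^sub>M M))"
proof -
  interpret MM: prob_space "M \<Otimes>\<^sub>M M" by (intro prob_space_pair prob_space_axioms)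
  have [measurable]: "T \<in> measurable M MT" using indep_var_rv1[OF indep] by simp
  have g_int: "integrable (M \<Otimes>\<^sub>M M) (\<lambda>(\<omega>, \<omega>'). g (T \<omega>) (T \<omega>'))"
    by (rule MM.integrable_const_bound[where B=1]) (auto simp: g_nonneg g_le_1 case_prod_beta)
  have "0 \<le> (\<integral>(\<omega>, \<omega>'). g (T \<omega>) (T \<omega>') \<partial>(M \<Otimes>\<^sub>M M))" "(\<integral>(\<omega>, \<omega>'). g (T \<omega>) (T \<omega>') \<partial>(M \<Otimes>\<^sub>M M)) \<le> 1"
    by (auto intro!: integral_nonneg_AE MM.integral_le_const[OF g_int] simp: case_prod_beta g_nonneg g_le_1)
  with F_nonneg show ?thesis
    using integral_pair_measure_indep_var_mult[OF indep F g _ F_int] g_nonneg g_le_1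
    by (simp add: mult_left_le)
qed

lemma integrable_feature_map_kernel:
  fixes Y :: "'a \<Rightarrow> real" and h :: "'a \<Rightarrow> 'w \<Rightarrow> real"
  assumes P: "prob_space P" and M: "sigma_finite_measure M" and Y: "integrable P Y"
    and h[measurable]: "(\<lambda>(a, w). h a w) \<in> borel_measurable (P \<Otimes>\<^sub>M M)"
    and h_nonneg: "\<And>a w. 0 \<le> h a w"
    and h_int: "\<And>a b. a \<in> space P \<Longrightarrow> b \<in> space P \<Longrightarrow> integrable M (\<lambda>w. h a w * h b w)"
    and h_bounded: "\<And>a b. a \<in> space P \<Longrightarrow> b \<in> space P \<Longrightarrow> (\<integral>w. h a w * h b w \<partial>M) \<le> C"
  shows "integrable ((P \<Otimes>\<^sub>M P) \<Otimes>\<^sub>M M) (\<lambda>((a, b), w). Y a * Y b * (h a w * h b w))"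
proof -
  interpret P: prob_space P by fact
  interpret PP: pair_sigma_finite P P ..
  interpret Q: pair_sigma_finite "P \<Otimes>\<^sub>M P" M
    using M by (simp add: pair_sigma_finite_def PP.sigma_finite_measure_axioms)
  have [measurable]: "Y \<in> borel_measurable P" using Y by auto
  have YY: "integrable (P \<Otimes>\<^sub>M P) (\<lambda>(a, b). Y a * Y b)"
    using integrable_pair_measure_mult[OF _ _ Y Y] P.sigma_finite_measure_axioms by simp
  show ?thesis
  proof (rule Q.Fubini_integrable)
    have "integrable (P \<Otimes>\<^sub>M P) (\<lambda>(a, b). \<bar>Y a * Y b\<bar> * (\<integral>w. h a w * h b w \<partial>M))"
    proof (rule Bochner_Integration.integrable_bound)
      show "integrable (P \<Otimes>\<^sub>M P) (\<lambda>q. max C 0 * \<bar>(case q of (a, b) \<Rightarrow> Y a * Y b)\<bar>)"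
        using YY by (intro integrable_mult_right integrable_abs)
      show "AE q in P \<Otimes>\<^sub>M P. norm (case q of (a, b) \<Rightarrow> \<bar>Y a * Y b\<bar> * (\<integral>w. h a w * h b w \<partial>M))
              \<le> norm (max C 0 * \<bar>(case q of (a, b) \<Rightarrow> Y a * Y b)\<bar>)"
      proof (rule AE_I2)
        fix q assume "q \<in> space (P \<Otimes>\<^sub>M P)"
        then obtain a b where q: "q = (a, b)" "a \<in> space P" "b \<in> space P"
          by (auto simp: space_pair_measure)
        then have "0 \<le> (\<integral>w. h a w * h b w \<partial>M)" "(\<integral>w. h a w * h b w \<partial>M) \<le> max C 0"
          using h_bounded[of a b] by (auto simp: h_nonneg)
        note mult_left_mono[OF this(2) abs_ge_zero[of "Y a * Y b"]] this(1)
        then show "norm (case q of (a, b) \<Rightarrow> \<bar>Y a * Y b\<bar> * (\<integral>w. h a w * h b w \<partial>M))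
            \<le> norm (max C 0 * \<bar>(case q of (a, b) \<Rightarrow> Y a * Y b)\<bar>)"
          unfolding q by (simp add: abs_mult ac_simps)
      qed
    qed measurable
    then show "integrable (P \<Otimes>\<^sub>M P)
        (\<lambda>q. \<integral>w. norm ((\<lambda>((a, b), w). Y a * Y b * (h a w * h b w)) (q, w)) \<partial>M)"
      by (simp add: case_prod_unfold abs_mult h_nonneg)
    show "AE q in P \<Otimes>\<^sub>M P. integrable M (\<lambda>w. (\<lambda>((a, b), w). Y a * Y b * (h a w * h b w)) (q, w))"
      by (intro AE_I2) (auto simp: space_pair_measure h_int)
  qed (unfold case_prod_unfold, measurable)
qed

lemma integral_feature_map_kernel_nonneg:
  fixes Y :: "'a \<Rightarrow> real" and h :: "'a \<Rightarrow> 'w \<Rightarrow> real"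
  assumes P: "prob_space P" and M: "sigma_finite_measure M" and Y: "integrable P Y"
    and h[measurable]: "(\<lambda>(a, w). h a w) \<in> borel_measurable (P \<Otimes>\<^sub>M M)"
    and h_nonneg: "\<And>a w. 0 \<le> h a w" and h_le_1: "\<And>a w. h a w \<le> 1"
    and h_int: "\<And>a b. a \<in> space P \<Longrightarrow> b \<in> space P \<Longrightarrow> integrable M (\<lambda>w. h a w * h b w)"
    and h_bounded: "\<And>a b. a \<in> space P \<Longrightarrow> b \<in> space P \<Longrightarrow> (\<integral>w. h a w * h b w \<partial>M) \<le> C"
  shows "0 \<le> (\<integral>(a, b). Y a * Y b * (\<integral>w. h a w * h b w \<partial>M) \<partial>(P \<Otimes>\<^sub>M P))"
proof -
  interpret P: prob_space P by fact
  interpret Q: pair_sigma_finite "P \<Otimes>\<^sub>M P" M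
    using M by (simp add: pair_sigma_finite_def P.sigma_finite_measure_axioms sigma_finite_pair_measure)
  have [measurable]: "Y \<in> borel_measurable P" using Y by auto
  have Yh_int: "integrable P (\<lambda>a. Y a * h a w)" if "w \<in> space M" for w
    using that h_nonneg h_le_1
    by (intro Bochner_Integration.integrable_bound[OF integrable_abs[OF Y]])
       (auto simp: abs_mult intro!: mult_left_le)
  have "(\<integral>(a, b). Y a * Y b * (\<integral>w. h a w * h b w \<partial>M) \<partial>(P \<Otimes>\<^sub>M P))
      = (\<integral>w. (\<integral>(a, b). Y a * Y b * (h a w * h b w) \<partial>(P \<Otimes>\<^sub>M P)) \<partial>M)"
    using Q.Fubini_integral[OF integrable_feature_map_kernel[OF assms(1-5,7,8)]]
    by (simp add: case_prod_unfold)
  also have "\<dots> = (\<integral>w. (\<integral>a. Y a * h a w \<partial>P)\<^sup>2 \<partial>M)"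
  proof (intro Bochner_Integration.integral_cong refl)
    fix w assume "w \<in> space M"
    then show "(\<integral>(a, b). Y a * Y b * (h a w * h b w) \<partial>(P \<Otimes>\<^sub>M P)) = (\<integral>a. Y a * h a w \<partial>P)\<^sup>2"
      using integral_pair_measure_mult[OF _ _ Yh_int Yh_int] P.sigma_finite_measure_axioms
      by (simp add: power2_eq_square ac_simps)
  qed
  also have "\<dots> \<ge> 0" by simp
  finally show ?thesis .
qed

lemma gaussian_product_integral:
  fixes \<gamma> a b :: real
  assumes "\<gamma> > 0"
  shows integrable_gaussian_product: "integrable lborel (\<lambda>w. exp (-2*\<gamma>*(a-w)\<^sup>2) * exp (-2*\<gamma>*(b-w)\<^sup>2))"
    and integral_gaussian_product:
      "(\<integral>w. exp (-2*\<gamma>*(a-w)\<^sup>2) * exp (-2*\<gamma>*(b-w)\<^sup>2) \<partial>lborel) = sqrt (pi / (4*\<gamma>)) * exp (-\<gamma>*(a-b)\<^sup>2)"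
proof -
  define \<sigma> where "\<sigma> = sqrt (1 / (8*\<gamma>))"
  have \<sigma>: "\<sigma> > 0" "\<sigma>\<^sup>2 = 1 / (8*\<gamma>)" unfolding \<sigma>_def using assms by simp_all
  \<comment> \<open>Completing the square turns the integrand into a multiple of a normal density.\<close>
  have eq: "exp (-2*\<gamma>*(a-w)\<^sup>2) * exp (-2*\<gamma>*(b-w)\<^sup>2)
      = sqrt (pi / (4*\<gamma>)) * exp (-\<gamma>*(a-b)\<^sup>2) * normal_density ((a+b)/2) \<sigma> w" for w
  proof -
    have "exp (-2*\<gamma>*(a-w)\<^sup>2) * exp (-2*\<gamma>*(b-w)\<^sup>2) = exp (-\<gamma>*(a-b)\<^sup>2) * exp (-(w - (a+b)/2)\<^sup>2 / (2*\<sigma>\<^sup>2))"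
      unfolding exp_add[symmetric] \<sigma>(2) using assms
      by (intro arg_cong[where f=exp]) (simp add: power2_eq_square field_simps)
    moreover have "sqrt (pi / (4*\<gamma>)) = sqrt (2 * pi * \<sigma>\<^sup>2)"
      unfolding \<sigma>(2) by (simp add: field_simps)
    ultimately show ?thesis
      using \<sigma>(1) by (simp add: normal_density_def)
  qed
  show "integrable lborel (\<lambda>w. exp (-2*\<gamma>*(a-w)\<^sup>2) * exp (-2*\<gamma>*(b-w)\<^sup>2))"
    unfolding eq using \<sigma>(1) by (intro integrable_mult_right) simp
  show "(\<integral>w. exp (-2*\<gamma>*(a-w)\<^sup>2) * exp (-2*\<gamma>*(b-w)\<^sup>2) \<partial>lborel) = sqrt (pi / (4*\<gamma>)) * exp (-\<gamma>*(a-b)\<^sup>2)"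
    unfolding eq using \<sigma>(1) by simp
qed

lemma gauss_kernel_nonneg: "0 \<le> gauss_kernel \<gamma> S x x'"
  by (simp add: gauss_kernel_def)

lemma gauss_kernel_le_1: "\<gamma> \<ge> 0 \<Longrightarrow> gauss_kernel \<gamma> S x x' \<le> 1"
  by (simp add: gauss_kernel_def sum_nonneg)

lemma gauss_kernel_insert:
  "i \<notin> S \<Longrightarrow> gauss_kernel \<gamma> (insert i S) x x' = exp (-\<gamma> * (x$i - x'$i)\<^sup>2) * gauss_kernel \<gamma> S x x'"
  by (simp add: gauss_kernel_def exp_add[symmetric] algebra_simps)

definition gauss_feature :: "real \<Rightarrow> 'n::finite set \<Rightarrow> real^'n \<Rightarrow> ('n \<Rightarrow> real) \<Rightarrow> real" where
  "gauss_feature \<gamma> S x w = (\<Prod>j\<in>S. exp (-2*\<gamma>*(x$j - w j)\<^sup>2))"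

lemma gauss_kernel_feature_integral:
  fixes x x' :: "real^'n::finite"
  assumes "\<gamma> > 0"
  shows integrable_gauss_feature:
      "integrable (\<Pi>\<^sub>M j\<in>S. lborel) (\<lambda>w. gauss_feature \<gamma> S x w * gauss_feature \<gamma> S x' w)"
    and integral_gauss_feature:
      "(\<integral>w. gauss_feature \<gamma> S x w * gauss_feature \<gamma> S x' w \<partial>(\<Pi>\<^sub>M j\<in>S. lborel))
       = sqrt (pi / (4*\<gamma>)) ^ card S * gauss_kernel \<gamma> S x x'"
proof -
  interpret product_sigma_finite "\<lambda>_::'n. lborel :: real measure"
    by (simp add: product_sigma_finite_def lborel.sigma_finite_measure_axioms)
  have split: "gauss_feature \<gamma> S x w * gauss_feature \<gamma> S x' w
      = (\<Prod>j\<in>S. exp (-2*\<gamma>*(x$j - w j)\<^sup>2) * exp (-2*\<gamma>*(x'$j - w j)\<^sup>2))" for w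
    by (simp add: gauss_feature_def prod.distrib)
  show "integrable (\<Pi>\<^sub>M j\<in>S. lborel) (\<lambda>w. gauss_feature \<gamma> S x w * gauss_feature \<gamma> S x' w)"
    unfolding split
    by (rule product_integrable_prod[of S "\<lambda>j t. exp (-2*\<gamma>*(x$j - t)\<^sup>2) * exp (-2*\<gamma>*(x'$j - t)\<^sup>2)"])
       (simp, rule integrable_gaussian_product[OF assms])
  have "(\<integral>w. gauss_feature \<gamma> S x w * gauss_feature \<gamma> S x' w \<partial>(\<Pi>\<^sub>M j\<in>S. lborel))
      = (\<Prod>j\<in>S. sqrt (pi / (4*\<gamma>)) * exp (-\<gamma>*(x$j - x'$j)\<^sup>2))"
    unfolding split
    by (subst product_integral_prod[of S "\<lambda>j t. exp (-2*\<gamma>*(x$j - t)\<^sup>2) * exp (-2*\<gamma>*(x'$j - t)\<^sup>2)"])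
       (simp, rule integrable_gaussian_product[OF assms], intro prod.cong refl integral_gaussian_product[OF assms])
  also have "\<dots> = sqrt (pi / (4*\<gamma>)) ^ card S * gauss_kernel \<gamma> S x x'"
    by (simp add: gauss_kernel_def prod.distrib exp_sum sum_distrib_left)
  finally show "(\<integral>w. gauss_feature \<gamma> S x w * gauss_feature \<gamma> S x' w \<partial>(\<Pi>\<^sub>M j\<in>S. lborel))
      = sqrt (pi / (4*\<gamma>)) ^ card S * gauss_kernel \<gamma> S x x'" .
qed

lemma integrable_gauss_kernel_pair:
  fixes X :: "'a \<Rightarrow> real^'n::finite" and Y :: "'a \<Rightarrow> real"
  assumes P: "prob_space P" and X[measurable]: "X \<in> borel_measurable P" and Y: "integrable P Y"
    and \<gamma>: "\<gamma> \<ge> 0"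
  shows "integrable (P \<Otimes>\<^sub>M P) (\<lambda>(a, b). Y a * Y b * gauss_kernel \<gamma> S (X a) (X b))"
proof (rule Bochner_Integration.integrable_bound)
  interpret P: prob_space P by fact
  have [measurable]: "Y \<in> borel_measurable P" "(\<lambda>a. X a $ j) \<in> borel_measurable P" for j
    using Y measurable_compose[OF X borel_measurable_nth] by auto
  show "integrable (P \<Otimes>\<^sub>M P) (\<lambda>(a, b). \<bar>Y a\<bar> * \<bar>Y b\<bar>)"
    using Y by (intro integrable_pair_measure_mult integrable_abs) (simp_all add: P.sigma_finite_measure_axioms)
  show "AE q in P \<Otimes>\<^sub>M P. norm (case q of (a, b) \<Rightarrow> Y a * Y b * gauss_kernel \<gamma> S (X a) (X b))
      \<le> norm (case q of (a, b) \<Rightarrow> \<bar>Y a\<bar> * \<bar>Y b\<bar>)"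
    using \<gamma> by (intro AE_I2) (auto simp: abs_mult gauss_kernel_nonneg gauss_kernel_le_1 intro!: mult_left_le)
  show "(\<lambda>(a, b). Y a * Y b * gauss_kernel \<gamma> S (X a) (X b)) \<in> borel_measurable (P \<Otimes>\<^sub>M P)"
    unfolding gauss_kernel_def by measurable
qed

lemma gauss_kernel_integral_nonneg:
  fixes X :: "'a \<Rightarrow> real^'n::finite" and Y :: "'a \<Rightarrow> real"
  assumes P: "prob_space P" and X[measurable]: "X \<in> borel_measurable P" and Y: "integrable P Y"
    and \<gamma>: "\<gamma> > 0"
  shows "0 \<le> (\<integral>(a, b). Y a * Y b * gauss_kernel \<gamma> S (X a) (X b) \<partial>(P \<Otimes>\<^sub>M P))"
proof -
  define c where "c = sqrt (pi / (4*\<gamma>)) ^ card S"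
  have c: "c > 0" unfolding c_def using \<gamma> by simp
  interpret lborels: product_sigma_finite "\<lambda>_::'n. lborel :: real measure"
    by (simp add: product_sigma_finite_def lborel.sigma_finite_measure_axioms)
  have "0 \<le> (\<integral>(a, b). Y a * Y b
      * (\<integral>w. gauss_feature \<gamma> S (X a) w * gauss_feature \<gamma> S (X b) w \<partial>(\<Pi>\<^sub>M j\<in>S. lborel)) \<partial>(P \<Otimes>\<^sub>M P))"
  proof (rule integral_feature_map_kernel_nonneg[OF P _ Y, where C=c])
    show "sigma_finite_measure (\<Pi>\<^sub>M j\<in>S. (lborel :: real measure))" by (rule lborels.sigma_finite) simp
    show "(\<lambda>(a, w). gauss_feature \<gamma> S (X a) w) \<in> borel_measurable (P \<Otimes>\<^sub>M (\<Pi>\<^sub>M j\<in>S. lborel))"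
      unfolding gauss_feature_def case_prod_unfold
    proof (intro borel_measurable_prod)
      fix j assume "j \<in> S"
      have [measurable]: "(\<lambda>a. X a $ j) \<in> borel_measurable P"
        using measurable_compose[OF X borel_measurable_nth] .
      have [measurable]: "(\<lambda>w. w j) \<in> borel_measurable (\<Pi>\<^sub>M j\<in>S. lborel)"
        using measurable_component_singleton[OF \<open>j \<in> S\<close>, of "\<lambda>_. lborel"] by simp
      show "(\<lambda>x. exp (- 2 * \<gamma> * (X (fst x) $ j - snd x j)\<^sup>2)) \<in> borel_measurable (P \<Otimes>\<^sub>M (\<Pi>\<^sub>M j\<in>S. lborel))"
        by measurable
    qed
    show "0 \<le> gauss_feature \<gamma> S x w" "gauss_feature \<gamma> S x w \<le> 1" for x w
      unfolding gauss_feature_def using \<gamma> by (auto intro!: prod_nonneg prod_le_1)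
    show "integrable (\<Pi>\<^sub>M j\<in>S. lborel) (\<lambda>w. gauss_feature \<gamma> S (X a) w * gauss_feature \<gamma> S (X b) w)" for a b
      by (rule integrable_gauss_feature[OF \<gamma>])
    show "(\<integral>w. gauss_feature \<gamma> S (X a) w * gauss_feature \<gamma> S (X b) w \<partial>(\<Pi>\<^sub>M j\<in>S. lborel)) \<le> c" for a b
      unfolding integral_gauss_feature[OF \<gamma>] c_def using \<gamma>
      by (intro mult_left_le gauss_kernel_le_1) simp_all
  qed
  also have "\<dots> = c * (\<integral>(a, b). Y a * Y b * gauss_kernel \<gamma> S (X a) (X b) \<partial>(P \<Otimes>\<^sub>M P))"
    unfolding integral_gauss_feature[OF \<gamma>] c_def integral_mult_right_zero[symmetric]
    by (simp add: case_prod_unfold ac_simps)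
  finally show ?thesis using c by (simp add: zero_le_mult_iff)
qed

lemma irrelevant_feature_indep_var:
  fixes P :: "((real^'n::finite) \<times> real) measure"
  assumes P: "prob_space P" and sets_P: "sets P = sets borel" and irrelevant: "irrelevant_feature P i"
  shows "prob_space.indep_var P
    borel (\<lambda>(x, y). (x $ i, 0 :: real^'n)) borel (\<lambda>(x, y). (y, \<chi> j. if j = i then 0 else x $ j))"
proof -
  interpret prob_space P by fact
  show ?thesis
  \<comment> \<open>\<open>indep_var\<close> needs both variables in one codomain type, so \<open>x $ i\<close> is padded with a zero vector.\<close>
  proof (rule indep_var_rectangleI)
    show "(\<lambda>(x, y). (x $ i, 0 :: real^'n)) \<in> borel_measurable P"
      unfolding measurable_cong_sets[OF sets_P refl] case_prod_unfold
      by (intro borel_measurable_continuous_onI continuous_intros)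
    have coord_cont: "continuous_on UNIV (\<lambda>\<omega>::(real^'n) \<times> real. if j = i then 0 else fst \<omega> $ j)" for j
      by (cases "j = i") (simp_all add: continuous_intros)
    show "(\<lambda>(x, y). (y, \<chi> j. if j = i then 0 else x $ j)) \<in> borel_measurable P"
      unfolding measurable_cong_sets[OF sets_P refl] case_prod_unfold
      by (intro borel_measurable_continuous_onI continuous_intros coord_cont)
    fix A B :: "(real \<times> (real^'n)) set" assume A: "A \<in> sets borel" and B: "B \<in> sets borel"
    have "(\<lambda>t::real. (t, 0 :: real^'n)) \<in> borel_measurable borel"
      by (intro borel_measurable_continuous_onI continuous_intros)
    from measurable_sets[OF this A] have "(\<lambda>t::real. (t, 0 :: real^'n)) -` A \<in> sets borel"
      by simp
    from irrelevant[unfolded irrelevant_feature_def, rule_format, OF this B] show "prob {\<omega> \<in> space P. (case \<omega> of (x, y) \<Rightarrow> (x $ i, 0)) \<in> A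
          \<and> (case \<omega> of (x, y) \<Rightarrow> (y, \<chi> j. if j = i then 0 else x $ j)) \<in> B}
        = prob {\<omega> \<in> space P. (case \<omega> of (x, y) \<Rightarrow> (x $ i, 0)) \<in> A}
          * prob {\<omega> \<in> space P. (case \<omega> of (x, y) \<Rightarrow> (y, \<chi> j. if j = i then 0 else x $ j)) \<in> B}"
      by (simp add: case_prod_unfold)
  qed
qed

theorem proposition2:
  fixes P :: "((real^'n::finite) \<times> real) measure"
    and \<gamma> :: real and S :: "'n set" and i :: 'n
  assumes "prob_space P"
    and "sets P = sets borel"
    and "integrable P (\<lambda>(x, y). y)"
    and "\<gamma> > 0"
    and "i \<notin> S"
    and "irrelevant_feature P i"
  shows "(\<integral>((x, y), (x', y')). y * y' * gauss_kernel \<gamma> (S \<union> {i}) x x' \<partial>(P \<Otimes>\<^sub>M P))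
       \<le> (\<integral>((x, y), (x', y')). y * y' * gauss_kernel \<gamma> S x x' \<partial>(P \<Otimes>\<^sub>M P))"
proof -
  interpret prob_space P by fact
  define T where "T = (\<lambda>(x :: real^'n, y :: real). (x $ i, 0 :: real^'n))"
  define Z where "Z = (\<lambda>(x :: real^'n, y :: real). (y, \<chi> j. if j = i then 0 else x $ j))"
  define F where "F = (\<lambda>(y :: real, x :: real^'n) (y', x'). y * y' * gauss_kernel \<gamma> S x x')"
  define g where "g = (\<lambda>(t :: real, _ :: real^'n) (t', _ :: real^'n). exp (-\<gamma> * (t - t')\<^sup>2))"
  have indep: "indep_var borel T borel Z"
    using irrelevant_feature_indep_var[OF assms(1,2,6)] unfolding T_def Z_def .
  have kernel_S: "F (Z \<omega>) (Z \<omega>') = snd \<omega> * snd \<omega>' * gauss_kernel \<gamma> S (fst \<omega>) (fst \<omega>')" for \<omega> \<omega>'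
    using \<open>i \<notin> S\<close> unfolding F_def Z_def gauss_kernel_def by (auto intro!: sum.cong split: prod.split)
  have kernel_insert: "snd \<omega> * snd \<omega>' * gauss_kernel \<gamma> (insert i S) (fst \<omega>) (fst \<omega>')
      = F (Z \<omega>) (Z \<omega>') * g (T \<omega>) (T \<omega>')" for \<omega> \<omega>'
    using \<open>i \<notin> S\<close> by (simp add: kernel_S gauss_kernel_insert g_def T_def case_prod_beta)
  have fst: "fst \<in> borel_measurable P"
    unfolding measurable_cong_sets[OF assms(2) refl] by (intro borel_measurable_continuous_onI continuous_intros)
  have snd: "integrable P snd" using assms(3) by (simp add: case_prod_beta')
  have "(\<integral>((x, y), (x', y')). y * y' * gauss_kernel \<gamma> (S \<union> {i}) x x' \<partial>(P \<Otimes>\<^sub>M P))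
      = (\<integral>(\<omega>, \<omega>'). F (Z \<omega>) (Z \<omega>') * g (T \<omega>) (T \<omega>') \<partial>(P \<Otimes>\<^sub>M P))"
    by (intro Bochner_Integration.integral_cong refl) (clarsimp simp: kernel_insert[symmetric])
  also have "\<dots> \<le> (\<integral>(\<omega>, \<omega>'). F (Z \<omega>) (Z \<omega>') \<partial>(P \<Otimes>\<^sub>M P))"
  proof (rule integral_pair_measure_indep_var_mult_le[OF indep])
    show "(\<lambda>(z, z'). F z z') \<in> borel_measurable (borel \<Otimes>\<^sub>M borel)"
      unfolding borel_prod F_def gauss_kernel_def case_prod_unfold
      by (intro borel_measurable_continuous_onI continuous_intros)
    show "(\<lambda>(t, t'). g t t') \<in> borel_measurable (borel \<Otimes>\<^sub>M borel)"
      unfolding borel_prod g_def case_prod_unfold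
      by (intro borel_measurable_continuous_onI continuous_intros)
    show "0 \<le> g t t'" "g t t' \<le> 1" for t t'
      using \<open>\<gamma> > 0\<close> by (auto simp: g_def split: prod.split)
    show "integrable (P \<Otimes>\<^sub>M P) (\<lambda>(\<omega>, \<omega>'). F (Z \<omega>) (Z \<omega>'))"
      using integrable_gauss_kernel_pair[OF assms(1) fst snd, of \<gamma> S] \<open>\<gamma> > 0\<close>
      by (simp add: kernel_S)
    show "0 \<le> (\<integral>(\<omega>, \<omega>'). F (Z \<omega>) (Z \<omega>') \<partial>(P \<Otimes>\<^sub>M P))"
      using gauss_kernel_integral_nonneg[OF assms(1) fst snd \<open>\<gamma> > 0\<close>, of S]
      by (simp add: kernel_S)
  qed
  also have "\<dots> = (\<integral>((x, y), (x', y')). y * y' * gauss_kernel \<gamma> S x x' \<partial>(P \<Otimes>\<^sub>M P))"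
    by (intro Bochner_Integration.integral_cong refl) (clarsimp simp: kernel_S)
  finally show ?thesis .
qed

end
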